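(* If $n\ge 3$ is odd, the free group $F_n$ has no $\Delta$-primitive elements.
   Context: $F_n$ is free with basis $x_1,\dots,x_n$; $\mathbb{Z}F_n$ is its integral group ring with augmentation ideal $\Delta$ (kernel of $\varepsilon:\mathbb{Z}F_n\to\mathbb{Z}$). For $g\in F_n$, the Fox derivatives $d_i(g)\in\mathbb{Z}F_n$ are the unique elements with $g-1=\sum_{i=1}^n d_i(g)(x_i-1)$. An element $u\in F_n$ is $\Delta$-primitive if $d_1(u),\dots,d_n(u)$ generate $\Delta$ as a right ideal of $\mathbb{Z}F_n$. *)

theory Defs
  imports Main
begin

text \<open>Free group F_n on generators x_0,...,x_(n-1) (the paper's x_1..x_n).
  A letter is (i, False) = x_i or (i, True) = x_i^-1.  Elements of F_n are
  freely reduced words over letters with index < n.\<close>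

type_synonym letter = "nat \<times> bool"
type_synonym word = "letter list"

fun fred :: "word \<Rightarrow> word" where
  "fred [] = []"
| "fred (x # xs) = (case fred xs of
      [] \<Rightarrow> [x]
    | y # ys \<Rightarrow> (if fst x = fst y \<and> snd x \<noteq> snd y then ys else x # y # ys))"

definition FG :: "nat \<Rightarrow> word set" where
  "FG n = {w. fred w = w \<and> (\<forall>l \<in> set w. fst l < n)}"

definition gmul :: "word \<Rightarrow> word \<Rightarrow> word" where
  "gmul u v = fred (u @ v)"

definition supp :: "(word \<Rightarrow> int) \<Rightarrow> word set" where
  "supp f = {g. f g \<noteq> 0}"

definition ZF :: "nat \<Rightarrow> (word \<Rightarrow> int) set" where
  "ZF n = {f. finite (supp f) \<and> supp f \<subseteq> FG n}"

definition radd :: "(word \<Rightarrow> int) \<Rightarrow> (word \<Rightarrow> int) \<Rightarrow> (word \<Rightarrow> int)" where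
  "radd f h = (\<lambda>g. f g + h g)"

definition rsub :: "(word \<Rightarrow> int) \<Rightarrow> (word \<Rightarrow> int) \<Rightarrow> (word \<Rightarrow> int)" where
  "rsub f h = (\<lambda>g. f g - h g)"

definition rzero :: "word \<Rightarrow> int" where
  "rzero = (\<lambda>g. 0)"

definition rmul :: "(word \<Rightarrow> int) \<Rightarrow> (word \<Rightarrow> int) \<Rightarrow> (word \<Rightarrow> int)" where
  "rmul f h = (\<lambda>g. \<Sum>(u, v) \<in> supp f \<times> supp h. if gmul u v = g then f u * h v else 0)"

definition rsum :: "nat \<Rightarrow> (nat \<Rightarrow> word \<Rightarrow> int) \<Rightarrow> (word \<Rightarrow> int)" where
  "rsum n F = (\<lambda>g. \<Sum>i<n. F i g)"

definition gel :: "word \<Rightarrow> (word \<Rightarrow> int)" where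
  "gel w = (\<lambda>g. if g = w then 1 else 0)"

definition rone :: "word \<Rightarrow> int" where
  "rone = gel []"

definition gen :: "nat \<Rightarrow> word" where
  "gen i = [(i, False)]"

definition aug :: "(word \<Rightarrow> int) \<Rightarrow> int" where
  "aug f = (\<Sum>g \<in> supp f. f g)"

definition Delta :: "nat \<Rightarrow> (word \<Rightarrow> int) set" where
  "Delta n = {f \<in> ZF n. aug f = 0}"

text \<open>Fox derivatives: the unique family d_0..d_(n-1) in Z F_n with
  g - 1 = sum_i d_i(g) (x_i - 1).  (Indices >= n are set to 0 for uniqueness.)\<close>
definition fox :: "nat \<Rightarrow> word \<Rightarrow> nat \<Rightarrow> (word \<Rightarrow> int)" where
  "fox n g = (THE d. (\<forall>i<n. d i \<in> ZF n) \<and> (\<forall>i\<ge>n. d i = rzero) \<and>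
      rsub (gel g) rone = rsum n (\<lambda>i. rmul (d i) (rsub (gel (gen i)) rone)))"

definition right_ideal_gen :: "nat \<Rightarrow> (nat \<Rightarrow> word \<Rightarrow> int) \<Rightarrow> (word \<Rightarrow> int) set" where
  "right_ideal_gen n a = {rsum n (\<lambda>i. rmul (a i) (r i)) | r. \<forall>i<n. r i \<in> ZF n}"

definition Delta_primitive :: "nat \<Rightarrow> word \<Rightarrow> bool" where
  "Delta_primitive n u \<longleftrightarrow> u \<in> FG n \<and> right_ideal_gen n (fox n u) = Delta n"

end

theory Submission
  imports Defs "Jordan_Normal_Form.Determinant"
begin

(* Let d_i be the Fox derivatives of a Delta-primitive u, and let e_k(f) be the linear extension
   of the exponent sum of x_k.  Since e_k(a b) = e_k(a) aug(b) whenever aug(a) = 0, writing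
   x_j - 1 = sum_i d_i r_ji shows that the integer matrix A_ik = e_k(d_i) has a left inverse.
   Pairing u - 1 = sum_i d_i (x_i - 1) with e_k gives aug(d_k) = e_k(u), and pairing it with the
   signed count c_km of pairs "x_k before x_m" gives A_mk = c_km(u).  As
   c_km + c_mk = e_k e_m - [k = m] e_k and all e_k(u) = aug(d_k) vanish, A is skew-symmetric;
   for odd n this forces det A = 0. *)

fun reduced :: "word \<Rightarrow> bool" where
  "reduced [] = True"
| "reduced [x] = True"
| "reduced (x # y # ys) = (\<not> (fst x = fst y \<and> snd x \<noteq> snd y) \<and> reduced (y # ys))"

lemma reduced_fred: "reduced (fred w)"
proof (induction w)
  case (Cons x xs)
  then show ?case
    by (cases "fred xs"; cases "tl (fred xs)") (auto split: list.splits)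
qed simp

lemma fred_reduced: "reduced w \<Longrightarrow> fred w = w"
  by (induction w rule: reduced.induct) auto

lemma fred_eq_iff_reduced: "fred w = w \<longleftrightarrow> reduced w"
  using reduced_fred fred_reduced by metis

lemma reduced_appendD: "reduced (xs @ ys) \<Longrightarrow> reduced xs"
proof (induction xs)
  case (Cons x xs)
  then show ?case by (cases xs) auto
qed simp

lemma fred_snoc:
  "reduced w \<Longrightarrow> fred (w @ [l]) =
    (if w \<noteq> [] \<and> fst (last w) = fst l \<and> snd (last w) \<noteq> snd l then butlast w else w @ [l])"
proof (induction w rule: reduced.induct)
  case (3 x y ys)
  then show ?case by (cases ys) (auto split: if_splits)
qed simp_all

lemma FG_reduced: "w \<in> FG n \<Longrightarrow> reduced w"
  by (simp add: FG_def fred_eq_iff_reduced)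

lemma FG_snocD: "w @ [l] \<in> FG n \<Longrightarrow> w \<in> FG n \<and> fst l < n"
  by (auto simp: FG_def fred_eq_iff_reduced dest: reduced_appendD)

lemma ZF_supp_reduced: "f \<in> ZF n \<Longrightarrow> u \<in> supp f \<Longrightarrow> reduced u"
  by (auto simp: ZF_def FG_reduced)

definition letter_sign :: "letter \<Rightarrow> int" where
  "letter_sign l = (if snd l then -1 else 1)"

definition exp_sum :: "nat \<Rightarrow> word \<Rightarrow> int" where
  "exp_sum k w = (\<Sum>l\<leftarrow>w. if fst l = k then letter_sign l else 0)"

lemma exp_sum_Nil [simp]: "exp_sum k [] = 0"
  by (simp add: exp_sum_def)

lemma exp_sum_Cons [simp]: "exp_sum k (x # w) = (if fst x = k then letter_sign x else 0) + exp_sum k w"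
  by (simp add: exp_sum_def)

lemma exp_sum_append [simp]: "exp_sum k (v @ w) = exp_sum k v + exp_sum k w"
  by (simp add: exp_sum_def)

lemma exp_sum_fred: "exp_sum k (fred w) = exp_sum k w"
proof (induction w)
  case (Cons x xs)
  then show ?case by (cases "fred xs") (auto simp: letter_sign_def split: if_splits)
qed simp

(* The signed number of pairs (occurrence of x_k, later occurrence of x_m); the last summand
   corrects for x_k^-1 so that the count is invariant under free reduction. *)
fun pair_sum :: "nat \<Rightarrow> nat \<Rightarrow> word \<Rightarrow> int" where
  "pair_sum k m [] = 0"
| "pair_sum k m (x # w) = pair_sum k m w + (if fst x = k then letter_sign x * exp_sum m w else 0)
     + (if x = (k, True) \<and> m = k then 1 else 0)"

lemma pair_sum_fred: "pair_sum k m (fred w) = pair_sum k m w"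
proof (induction w)
  case (Cons x xs)
  show ?case
  proof (cases "fred xs")
    case Nil
    then show ?thesis using Cons exp_sum_fred[of m xs] by simp
  next
    case (Cons y ys)
    then have "exp_sum m xs = exp_sum m (y # ys)" "pair_sum k m xs = pair_sum k m (y # ys)"
      using exp_sum_fred[of m xs] \<open>pair_sum k m (fred xs) = pair_sum k m xs\<close> by auto
    with Cons show ?thesis
      by (cases x; cases y) (auto simp: letter_sign_def)
  qed
qed simp

lemma pair_sum_snoc:
  "pair_sum k m (w @ [l]) = pair_sum k m w + (if fst l = m then exp_sum k w * letter_sign l else 0)
     + (if l = (k, True) \<and> m = k then 1 else 0)"
  by (induction w) (auto simp: algebra_simps)

lemma pair_sum_swap:
  "pair_sum k m w + pair_sum m k w = exp_sum k w * exp_sum m w - (if k = m then exp_sum k w else 0)"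
  by (induction w) (auto simp: algebra_simps letter_sign_def)

definition linext :: "(word \<Rightarrow> int) \<Rightarrow> (word \<Rightarrow> int) \<Rightarrow> int" where
  "linext \<phi> f = (\<Sum>g\<in>supp f. f g * \<phi> g)"

lemma linext_superset:
  "finite S \<Longrightarrow> supp f \<subseteq> S \<Longrightarrow> linext \<phi> f = (\<Sum>g\<in>S. f g * \<phi> g)"
  unfolding linext_def by (rule sum.mono_neutral_left) (auto simp: supp_def)

lemma linext_cong: "(\<And>g. g \<in> supp f \<Longrightarrow> \<phi> g = \<psi> g) \<Longrightarrow> linext \<phi> f = linext \<psi> f"
  unfolding linext_def by (rule sum.cong) auto

lemma linext_indicator: "finite (supp f) \<Longrightarrow> linext (\<lambda>g. if g = h then 1 else 0) f = f h"
  unfolding linext_def by (auto simp: supp_def if_distrib sum.delta' cong: if_cong)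

lemma aug_eq_linext: "aug f = linext (\<lambda>_. 1) f"
  by (simp add: aug_def linext_def)

lemma supp_radd: "supp (radd f h) \<subseteq> supp f \<union> supp h"
  by (auto simp: supp_def radd_def)

lemma supp_rsub: "supp (rsub f h) \<subseteq> supp f \<union> supp h"
  by (auto simp: supp_def rsub_def)

lemma supp_gel [simp]: "supp (gel w) = {w}"
  by (auto simp: supp_def gel_def)

lemma supp_rzero [simp]: "supp rzero = {}"
  by (auto simp: supp_def rzero_def)

lemma supp_rsum: "supp (rsum n F) \<subseteq> (\<Union>i<n. supp (F i))"
  by (auto simp: supp_def rsum_def intro: ccontr)

lemma supp_rmul: "supp (rmul a b) \<subseteq> (\<lambda>(u, v). gmul u v) ` (supp a \<times> supp b)"
proof
  fix g assume "g \<in> supp (rmul a b)"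
  then have "(\<Sum>(u, v) \<in> supp a \<times> supp b. if gmul u v = g then a u * b v else 0) \<noteq> 0"
    by (simp add: supp_def rmul_def)
  then obtain p where "p \<in> supp a \<times> supp b"
    and "(case p of (u, v) \<Rightarrow> if gmul u v = g then a u * b v else 0) \<noteq> 0"
    by (meson sum.neutral)
  then show "g \<in> (\<lambda>(u, v). gmul u v) ` (supp a \<times> supp b)"
    by (cases p) (auto split: if_splits)
qed

lemma finite_supp_radd: "finite (supp f) \<Longrightarrow> finite (supp h) \<Longrightarrow> finite (supp (radd f h))"
  using supp_radd by (meson finite_UnI finite_subset)

lemma finite_supp_rmul: "finite (supp f) \<Longrightarrow> finite (supp h) \<Longrightarrow> finite (supp (rmul f h))"
  by (rule finite_subset[OF supp_rmul]) auto

lemma linext_radd: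
  "finite (supp f) \<Longrightarrow> finite (supp h) \<Longrightarrow> linext \<phi> (radd f h) = linext \<phi> f + linext \<phi> h"
  by (subst (1 2 3) linext_superset[of "supp f \<union> supp h"])
    (use supp_radd in \<open>auto simp: radd_def sum.distrib algebra_simps\<close>)

lemma linext_rsub:
  "finite (supp f) \<Longrightarrow> finite (supp h) \<Longrightarrow> linext \<phi> (rsub f h) = linext \<phi> f - linext \<phi> h"
  by (subst (1 2 3) linext_superset[of "supp f \<union> supp h"])
    (use supp_rsub in \<open>auto simp: rsub_def sum_subtractf algebra_simps\<close>)

lemma linext_gel [simp]: "linext \<phi> (gel w) = \<phi> w"
  unfolding linext_def supp_gel by (simp add: gel_def)

lemma linext_rzero [simp]: "linext \<phi> rzero = 0"
  by (simp add: linext_def)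

lemma linext_zero_fun [simp]: "linext (\<lambda>_. 0) f = 0"
  by (simp add: linext_def)

lemma linext_rsum:
  assumes "\<And>i. i < n \<Longrightarrow> finite (supp (F i))"
  shows "linext \<phi> (rsum n F) = (\<Sum>i<n. linext \<phi> (F i))"
proof -
  let ?S = "\<Union>i<n. supp (F i)"
  have fin: "finite ?S" using assms by auto
  have "linext \<phi> (rsum n F) = (\<Sum>g\<in>?S. rsum n F g * \<phi> g)"
    by (rule linext_superset[OF fin supp_rsum])
  also have "\<dots> = (\<Sum>g\<in>?S. \<Sum>i<n. F i g * \<phi> g)"
    by (simp add: rsum_def sum_distrib_right)
  also have "\<dots> = (\<Sum>i<n. \<Sum>g\<in>?S. F i g * \<phi> g)"
    by (rule sum.swap)
  also have "\<dots> = (\<Sum>i<n. linext \<phi> (F i))"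
    by (rule sum.cong[OF refl], rule linext_superset[symmetric, OF fin]) auto
  finally show ?thesis .
qed

lemma linext_rmul:
  assumes fa: "finite (supp a)" and fb: "finite (supp b)"
  shows "linext \<phi> (rmul a b) = (\<Sum>(u, v)\<in>supp a \<times> supp b. a u * b v * \<phi> (gmul u v))"
proof -
  let ?P = "supp a \<times> supp b"
  let ?S = "(\<lambda>(u, v). gmul u v) ` ?P"
  let ?t = "\<lambda>p g. if gmul (fst p) (snd p) = g then a (fst p) * b (snd p) * \<phi> g else 0"
  have fin: "finite ?S" using fa fb by auto
  have "linext \<phi> (rmul a b) = (\<Sum>g\<in>?S. rmul a b g * \<phi> g)"
    by (rule linext_superset[OF fin supp_rmul])
  also have "\<dots> = (\<Sum>g\<in>?S. \<Sum>p\<in>?P. ?t p g)"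
    unfolding rmul_def sum_distrib_right case_prod_beta by (intro sum.cong refl) auto
  also have "\<dots> = (\<Sum>p\<in>?P. \<Sum>g\<in>?S. ?t p g)"
    by (rule sum.swap)
  also have "\<dots> = (\<Sum>p\<in>?P. a (fst p) * b (snd p) * \<phi> (gmul (fst p) (snd p)))"
  proof (rule sum.cong[OF refl])
    fix p assume "p \<in> ?P"
    then have "gmul (fst p) (snd p) \<in> ?S" by force
    then show "(\<Sum>g\<in>?S. ?t p g) = a (fst p) * b (snd p) * \<phi> (gmul (fst p) (snd p))"
      using fin by simp
  qed
  finally show ?thesis by (simp add: case_prod_beta)
qed

(* Exponent sums are homomorphisms to Z, so their linear extensions are derivations. *)
lemma linext_exp_sum_rmul:
  assumes fa: "finite (supp a)" and fb: "finite (supp b)"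
  shows "linext (exp_sum k) (rmul a b) = linext (exp_sum k) a * aug b + aug a * linext (exp_sum k) b"
proof -
  have "linext (exp_sum k) (rmul a b)
      = (\<Sum>(u, v)\<in>supp a \<times> supp b. (a u * exp_sum k u) * b v + a u * (b v * exp_sum k v))"
    by (simp add: linext_rmul[OF fa fb] gmul_def exp_sum_fred algebra_simps)
  also have "\<dots> = (\<Sum>u\<in>supp a. a u * exp_sum k u) * (\<Sum>v\<in>supp b. b v)
      + (\<Sum>u\<in>supp a. a u) * (\<Sum>v\<in>supp b. b v * exp_sum k v)"
    by (simp add: sum.distrib sum_product sum.cartesian_product case_prod_beta)
  finally show ?thesis by (simp add: linext_def aug_def)
qed

lemma rmul_rone: "f \<in> ZF n \<Longrightarrow> rmul f rone = f"
proof (rule ext)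
  fix g assume f: "f \<in> ZF n"
  have "rmul f rone g = (\<Sum>u\<in>supp f. if u = g then f u else 0)"
    unfolding rmul_def rone_def supp_gel sum.cartesian_product[symmetric]
    by (intro sum.cong refl) (simp add: gel_def gmul_def fred_reduced ZF_supp_reduced[OF f])
  then show "rmul f rone g = f g"
    using f by (auto simp: ZF_def supp_def)
qed

subsection \<open>Fox derivatives\<close>

abbreviation gen_sub_one :: "nat \<Rightarrow> word \<Rightarrow> int" where
  "gen_sub_one i \<equiv> rsub (gel (gen i)) rone"

lemma supp_gen_sub_one: "supp (gen_sub_one i) = {[(i, False)], []}"
  by (auto simp: supp_def rsub_def gel_def rone_def gen_def)

definition right_diff :: "(word \<Rightarrow> int) \<Rightarrow> nat \<Rightarrow> word \<Rightarrow> int" where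
  "right_diff \<phi> i v = \<phi> (gmul v (gen i)) - \<phi> v"

lemma linext_rmul_gen_sub_one:
  assumes "a \<in> ZF n"
  shows "linext \<phi> (rmul a (gen_sub_one i)) = linext (right_diff \<phi> i) a"
proof -
  have fa: "finite (supp a)" using assms by (simp add: ZF_def)
  have fb: "finite (supp (gen_sub_one i))" by (simp add: supp_gen_sub_one)
  have "linext \<phi> (rmul a (gen_sub_one i)) =
      (\<Sum>u\<in>supp a. \<Sum>v\<in>{[(i, False)], []}. a u * gen_sub_one i v * \<phi> (gmul u v))"
    unfolding linext_rmul[OF fa fb] supp_gen_sub_one by (rule sum.cartesian_product[symmetric])
  also have "\<dots> = (\<Sum>u\<in>supp a. a u * right_diff \<phi> i u)"
    by (rule sum.cong[OF refl])
      (auto simp: rsub_def gel_def rone_def gen_def gmul_def right_diff_def algebra_simps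
        fred_reduced ZF_supp_reduced[OF assms])
  finally show ?thesis by (simp add: linext_def)
qed

lemma linext_fox_expansion:
  assumes "\<forall>i<n. d i \<in> ZF n"
  shows "linext \<phi> (rsum n (\<lambda>i. rmul (d i) (gen_sub_one i))) = (\<Sum>i<n. linext (right_diff \<phi> i) (d i))"
proof -
  have "\<forall>i<n. finite (supp (rmul (d i) (gen_sub_one i)))"
    using assms by (simp add: finite_supp_rmul supp_gen_sub_one ZF_def)
  then show ?thesis
    using assms by (auto simp: linext_rsum intro!: sum.cong linext_rmul_gen_sub_one)
qed

(* fox_term i w l = w * d_i(l), so fox_deriv is the product rule unrolled along w. *)
definition fox_term :: "nat \<Rightarrow> word \<Rightarrow> letter \<Rightarrow> word \<Rightarrow> int" where
  "fox_term i w l =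
    (if l = (i, False) then gel w else if l = (i, True) then rsub rzero (gel (w @ [l])) else rzero)"

definition fox_deriv :: "nat \<Rightarrow> word \<Rightarrow> word \<Rightarrow> int" where
  "fox_deriv i w = rsum (length w) (\<lambda>p. fox_term i (take p w) (w ! p))"

lemma fox_deriv_Nil [simp]: "fox_deriv i [] = rzero"
  by (simp add: fox_deriv_def rsum_def rzero_def)

lemma fox_deriv_snoc [simp]: "fox_deriv i (w @ [l]) = radd (fox_deriv i w) (fox_term i w l)"
  by (auto simp: fox_deriv_def rsum_def radd_def nth_append intro!: sum.cong)

lemma supp_fox_term: "supp (fox_term i w l) \<subseteq> {w, w @ [l]}"
  by (auto simp: fox_term_def supp_def rsub_def rzero_def gel_def)

lemma fox_deriv_ZF: "w \<in> FG n \<Longrightarrow> fox_deriv i w \<in> ZF n"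
proof (induction w rule: rev_induct)
  case (snoc l w)
  then have w: "w \<in> FG n" using FG_snocD by blast
  have "finite (supp (fox_term i w l))" "supp (fox_term i w l) \<subseteq> FG n"
    using supp_fox_term[of i w l] w snoc.prems by (auto intro: finite_subset)
  then show ?case
    using snoc.IH[OF w] supp_radd[of "fox_deriv i w" "fox_term i w l"]
    by (auto simp: ZF_def intro: finite_supp_radd)
qed (simp add: ZF_def)

lemma linext_right_diff_fox_term:
  assumes "w @ [l] \<in> FG n"
  shows "linext (right_diff \<phi> i) (fox_term i w l) = (if i = fst l then \<phi> (w @ [l]) - \<phi> w else 0)"
proof -
  obtain a b where l: "l = (a, b)" by fastforce
  have r: "reduced (w @ [(a, b)])" using assms FG_reduced l by blast
  then have "fred (w @ [(a, b)]) = w @ [(a, b)]" by (simp add: fred_reduced)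
  moreover have "fred (w @ [(a, b), (a, False)]) = w" if b
    using fred_snoc[OF r, of "(a, False)"] that by simp
  ultimately show ?thesis
    by (cases b) (auto simp: l fox_term_def right_diff_def gmul_def gen_def linext_rsub)
qed

lemma linext_right_diff_fox_deriv:
  "w \<in> FG n \<Longrightarrow> (\<Sum>i<n. linext (right_diff \<phi> i) (fox_deriv i w)) = \<phi> w - \<phi> []"
proof (induction w rule: rev_induct)
  case (snoc l w)
  then have w: "w \<in> FG n" and l: "fst l < n" using FG_snocD by blast+
  have "finite (supp (fox_deriv i w))" for i using fox_deriv_ZF[OF w] by (simp add: ZF_def)
  moreover have "finite (supp (fox_term i w l))" for i
    using supp_fox_term[of i w l] by (rule finite_subset) simp
  ultimately have "(\<Sum>i<n. linext (right_diff \<phi> i) (fox_deriv i (w @ [l]))) =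
      (\<Sum>i<n. linext (right_diff \<phi> i) (fox_deriv i w)) + (\<Sum>i<n. linext (right_diff \<phi> i) (fox_term i w l))"
    by (simp add: linext_radd sum.distrib)
  also have "(\<Sum>i<n. linext (right_diff \<phi> i) (fox_term i w l)) = \<phi> (w @ [l]) - \<phi> w"
    using l by (simp add: linext_right_diff_fox_term[OF snoc.prems])
  finally show ?case using snoc.IH[OF w] by simp
qed simp

lemma fox_term_apply:
  "fox_term i w l h = (if l = (i, False) \<and> h = w then 1 else if l = (i, True) \<and> h = w @ [l] then -1 else 0)"
  by (simp add: fox_term_def gel_def rsub_def rzero_def)

lemma right_diff_fox_deriv:
  assumes "reduced v"
  shows "right_diff (\<lambda>g. fox_deriv j g h) i v = (if i = j \<and> v = h then 1 else 0)"
proof (cases "v \<noteq> [] \<and> last v = (i, True)")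
  case True
  then obtain w where v: "v = w @ [(i, True)]"
    by (metis append_butlast_last_id)
  then have "gmul v (gen i) = w"
    using fred_snoc[OF assms, of "(i, False)"] by (simp add: gmul_def gen_def)
  then show ?thesis
    using v by (auto simp: right_diff_def radd_def fox_term_apply)
next
  case False
  then have "gmul v (gen i) = v @ [(i, False)]"
    using fred_snoc[OF assms, of "(i, False)"] by (cases "last v") (auto simp: gmul_def gen_def)
  then show ?thesis
    by (simp add: right_diff_def radd_def fox_term_apply)
qed

definition is_fox :: "nat \<Rightarrow> word \<Rightarrow> (nat \<Rightarrow> word \<Rightarrow> int) \<Rightarrow> bool" where
  "is_fox n u d \<longleftrightarrow> (\<forall>i<n. d i \<in> ZF n) \<and> (\<forall>i\<ge>n. d i = rzero) \<and>
      rsub (gel u) rone = rsum n (\<lambda>i. rmul (d i) (gen_sub_one i))"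

lemma fox_coeff_eq:
  assumes "\<forall>i<n. d i \<in> ZF n" and "j < n"
  shows "linext (\<lambda>g. fox_deriv j g h) (rsum n (\<lambda>i. rmul (d i) (gen_sub_one i))) = d j h"
proof -
  have "linext (right_diff (\<lambda>g. fox_deriv j g h) i) (d i) = (if i = j then d i h else 0)"
    if i: "i < n" for i
  proof -
    have "linext (right_diff (\<lambda>g. fox_deriv j g h) i) (d i)
        = linext (\<lambda>g. if i = j then (if g = h then 1 else 0) else 0) (d i)"
      using assms(1) i by (intro linext_cong) (auto simp: right_diff_fox_deriv ZF_supp_reduced)
    also have "\<dots> = (if i = j then d i h else 0)"
      using assms(1) i linext_indicator[of "d i" h] by (auto simp: ZF_def)
    finally show ?thesis .
  qed
  then show ?thesis
    using assms by (simp add: linext_fox_expansion)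
qed

lemma is_fox_unique:
  assumes d: "is_fox n u d" and d': "is_fox n u d'"
  shows "d = d'"
proof (intro ext)
  fix j h
  show "d j h = d' j h"
  proof (cases "j < n")
    case True
    have dZ: "\<forall>i<n. d i \<in> ZF n" using d by (simp add: is_fox_def)
    have d'Z: "\<forall>i<n. d' i \<in> ZF n" using d' by (simp add: is_fox_def)
    have "d j h = linext (\<lambda>g. fox_deriv j g h) (rsum n (\<lambda>i. rmul (d i) (gen_sub_one i)))"
      by (rule fox_coeff_eq[OF dZ True, symmetric])
    also have "rsum n (\<lambda>i. rmul (d i) (gen_sub_one i)) = rsum n (\<lambda>i. rmul (d' i) (gen_sub_one i))"
      using d d' unfolding is_fox_def by argo
    also have "linext (\<lambda>g. fox_deriv j g h) \<dots> = d' j h"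
      by (rule fox_coeff_eq[OF d'Z True])
    finally show ?thesis .
  next
    case False
    then show ?thesis using d d' by (simp add: is_fox_def)
  qed
qed

lemma is_fox_fox_deriv: "u \<in> FG n \<Longrightarrow> is_fox n u (\<lambda>i. if i < n then fox_deriv i u else rzero)"
proof -
  assume u: "u \<in> FG n"
  let ?d = "\<lambda>i. if i < n then fox_deriv i u else rzero"
  have d: "\<forall>i<n. ?d i \<in> ZF n" using fox_deriv_ZF[OF u] by simp
  have "rsum n (\<lambda>i. rmul (?d i) (gen_sub_one i)) h = rsub (gel u) rone h" for h
  proof -
    have "finite (supp (rsum n (\<lambda>i. rmul (?d i) (gen_sub_one i))))"
      using d by (intro finite_subset[OF supp_rsum] finite_UN_I finite_supp_rmul)
        (auto simp: ZF_def supp_gen_sub_one)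
    then have "rsum n (\<lambda>i. rmul (?d i) (gen_sub_one i)) h
        = (\<Sum>i<n. linext (right_diff (\<lambda>g. if g = h then 1 else 0) i) (fox_deriv i u))"
      by (simp add: linext_indicator[symmetric] linext_fox_expansion[OF d])
    then show ?thesis
      by (simp add: linext_right_diff_fox_deriv[OF u] rsub_def gel_def rone_def)
  qed
  with d show ?thesis by (auto simp: is_fox_def)
qed

lemma fox_eq_fox_deriv:
  assumes "u \<in> FG n"
  shows "fox n u = (\<lambda>i. if i < n then fox_deriv i u else rzero)"
proof -
  have "(THE d. is_fox n u d) = (\<lambda>i. if i < n then fox_deriv i u else rzero)"
    by (rule the_equality[where P = "is_fox n u", OF is_fox_fox_deriv[OF assms]])
      (use is_fox_unique is_fox_fox_deriv[OF assms] in blast)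
  then show ?thesis by (simp add: fox_def is_fox_def)
qed

lemma linext_right_diff_fox:
  "u \<in> FG n \<Longrightarrow> (\<Sum>i<n. linext (right_diff \<phi> i) (fox n u i)) = \<phi> u - \<phi> []"
  by (simp add: fox_eq_fox_deriv linext_right_diff_fox_deriv)

lemma fox_ZF: "u \<in> FG n \<Longrightarrow> i < n \<Longrightarrow> fox n u i \<in> ZF n"
  by (simp add: fox_eq_fox_deriv fox_deriv_ZF)

subsection \<open>The exponent-sum matrix of the Fox derivatives\<close>

lemma right_diff_exp_sum: "right_diff (exp_sum k) i = (\<lambda>v. if i = k then 1 else 0)"
  by (rule ext) (simp add: right_diff_def gmul_def gen_def exp_sum_fred letter_sign_def)

lemma right_diff_pair_sum: "right_diff (pair_sum k m) i = (\<lambda>v. if i = m then exp_sum k v else 0)"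
  by (rule ext) (simp add: right_diff_def gmul_def gen_def pair_sum_fred pair_sum_snoc letter_sign_def)

lemma exp_sum_eq_aug_fox:
  assumes "u \<in> FG n" and "k < n"
  shows "exp_sum k u = aug (fox n u k)"
proof -
  have "exp_sum k u = (\<Sum>i<n. linext (right_diff (exp_sum k) i) (fox n u i))"
    using linext_right_diff_fox[OF assms(1)] by simp
  also have "\<dots> = (\<Sum>i<n. if i = k then aug (fox n u i) else 0)"
    by (intro sum.cong) (auto simp: right_diff_exp_sum aug_eq_linext)
  finally show ?thesis using assms(2) by simp
qed

lemma pair_sum_eq_linext_fox:
  assumes "u \<in> FG n" and "m < n"
  shows "pair_sum k m u = linext (exp_sum k) (fox n u m)"
proof -
  have "pair_sum k m u = (\<Sum>i<n. linext (right_diff (pair_sum k m) i) (fox n u i))"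
    using linext_right_diff_fox[OF assms(1)] by simp
  also have "\<dots> = (\<Sum>i<n. if i = m then linext (exp_sum k) (fox n u i) else 0)"
    by (intro sum.cong) (auto simp: right_diff_pair_sum)
  finally show ?thesis using assms(2) by simp
qed

lemma fox_exp_sum_skew:
  assumes u: "u \<in> FG n" and aug: "\<forall>i<n. aug (fox n u i) = 0" and "i < n" "k < n"
  shows "linext (exp_sum k) (fox n u i) + linext (exp_sum i) (fox n u k) = 0"
proof -
  have "linext (exp_sum k) (fox n u i) + linext (exp_sum i) (fox n u k)
      = exp_sum k u * exp_sum i u - (if k = i then exp_sum k u else 0)"
    using assms by (simp add: pair_sum_eq_linext_fox[symmetric] pair_sum_swap)
  also have "\<dots> = 0"
    using assms by (simp add: exp_sum_eq_aug_fox)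
  finally show ?thesis .
qed

lemma rmul_zero_right [simp]: "rmul f (\<lambda>_. 0) = (\<lambda>_. 0)"
  by (simp add: rmul_def supp_def)

lemma right_ideal_gen_generator:
  assumes aZ: "\<forall>i<n. a i \<in> ZF n" and j: "j < n"
  shows "a j \<in> right_ideal_gen n a"
proof -
  let ?r = "\<lambda>i. if i = j then rone else rzero"
  have "\<forall>i<n. ?r i \<in> ZF n"
    by (auto simp: ZF_def rone_def FG_def)
  moreover have "rsum n (\<lambda>i. rmul (a i) (?r i)) g = a j g" for g
  proof -
    have "rsum n (\<lambda>i. rmul (a i) (?r i)) g = (\<Sum>i<n. if i = j then a j g else 0)"
      unfolding rsum_def using aZ by (intro sum.cong) (auto simp: rmul_rone rzero_def)
    then show ?thesis using j by simp
  qed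
  ultimately show ?thesis
    unfolding right_ideal_gen_def by (intro CollectI exI[of _ ?r]) auto
qed

lemma exp_sum_matrix_left_inverse:
  assumes aZ: "\<forall>i<n. a i \<in> ZF n" and aug: "\<forall>i<n. aug (a i) = 0"
    and Delta: "Delta n \<subseteq> right_ideal_gen n a"
  shows "\<exists>E. \<forall>j<n. \<forall>k<n. (\<Sum>i<n. E j i * linext (exp_sum k) (a i)) = (if j = k then 1 else 0)"
proof -
  have "\<forall>j<n. \<exists>r. (\<forall>i<n. r i \<in> ZF n) \<and> gen_sub_one j = rsum n (\<lambda>i. rmul (a i) (r i))"
  proof (intro allI impI)
    fix j assume "j < n"
    then have "gen_sub_one j \<in> ZF n"
      by (simp add: ZF_def supp_gen_sub_one FG_def)
    moreover have "aug (gen_sub_one j) = 0"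
      by (simp add: aug_eq_linext linext_rsub rone_def)
    ultimately have "gen_sub_one j \<in> right_ideal_gen n a"
      using Delta by (auto simp: Delta_def)
    then show "\<exists>r. (\<forall>i<n. r i \<in> ZF n) \<and> gen_sub_one j = rsum n (\<lambda>i. rmul (a i) (r i))"
      by (auto simp: right_ideal_gen_def)
  qed
  then obtain R where R: "\<And>j. j < n \<Longrightarrow>
      (\<forall>i<n. R j i \<in> ZF n) \<and> gen_sub_one j = rsum n (\<lambda>i. rmul (a i) (R j i))"
    by metis
  have "(\<Sum>i<n. aug (R j i) * linext (exp_sum k) (a i)) = (if j = k then 1 else 0)"
    if j: "j < n" for j k
  proof -
    have fin: "finite (supp (a i))" "finite (supp (R j i))" if "i < n" for i
      using aZ R[OF j] that by (simp_all add: ZF_def)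
    have "(if j = k then 1 else 0) = linext (exp_sum k) (gen_sub_one j)"
      by (simp add: linext_rsub rone_def gen_def letter_sign_def)
    also have "\<dots> = linext (exp_sum k) (rsum n (\<lambda>i. rmul (a i) (R j i)))"
      using R[OF j] by simp
    also have "\<dots> = (\<Sum>i<n. linext (exp_sum k) (rmul (a i) (R j i)))"
      by (rule linext_rsum) (simp add: finite_supp_rmul fin)
    also have "\<dots> = (\<Sum>i<n. aug (R j i) * linext (exp_sum k) (a i))"
      by (rule sum.cong[OF refl]) (simp add: linext_exp_sum_rmul fin aug)
    finally show ?thesis by simp
  qed
  then show ?thesis
    by (intro exI[of _ "\<lambda>j i. aug (R j i)"]) simp
qed

subsection \<open>Skew-symmetric matrices of odd size\<close>

lemma det_skew_symmetric_odd:
  fixes A :: "'a :: {idom, ring_char_0} mat"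
  assumes A: "A \<in> carrier_mat n n" and "odd n" and skew: "transpose_mat A = (-1) \<cdot>\<^sub>m A"
  shows "det A = 0"
proof -
  have "det A = (-1) ^ n * det A"
    using det_transpose[OF A] A by (simp add: skew)
  then have "2 * det A = 0"
    using \<open>odd n\<close> by (simp add: algebra_simps)
  then show ?thesis by simp
qed

lemma skew_symmetric_odd_not_left_invertible:
  fixes A E :: "nat \<Rightarrow> nat \<Rightarrow> 'a :: {idom, ring_char_0}"
  assumes "odd n"
    and skew: "\<forall>i<n. \<forall>k<n. A i k + A k i = 0"
    and inv: "\<forall>j<n. \<forall>k<n. (\<Sum>i<n. E j i * A i k) = (if j = k then 1 else 0)"
  shows False
proof -
  define MA where "MA = mat n n (\<lambda>(i, k). A i k)"
  define ME where "ME = mat n n (\<lambda>(i, k). E i k)"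
  have MA: "MA \<in> carrier_mat n n" and ME: "ME \<in> carrier_mat n n"
    by (auto simp: MA_def ME_def)
  have "ME * MA = 1\<^sub>m n"
    using inv by (intro eq_matI) (auto simp: MA_def ME_def scalar_prod_def atLeast0LessThan)
  then have "det ME * det MA = 1"
    using det_mult[OF ME MA] by simp
  moreover have "transpose_mat MA = (-1) \<cdot>\<^sub>m MA"
    using skew by (intro eq_matI) (auto simp: MA_def eq_neg_iff_add_eq_0 add.commute)
  then have "det MA = 0"
    using det_skew_symmetric_odd[OF MA \<open>odd n\<close>] by blast
  ultimately show False by simp
qed

theorem corollary1p5:
  fixes n :: nat
  assumes "odd n" and "n \<ge> 3"
  shows "\<not> (\<exists>u \<in> FG n. Delta_primitive n u)"
proof
  assume "\<exists>u \<in> FG n. Delta_primitive n u"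
  then obtain u where u: "u \<in> FG n" and prim: "right_ideal_gen n (fox n u) = Delta n"
    by (auto simp: Delta_primitive_def)
  have foxZ: "\<forall>i<n. fox n u i \<in> ZF n"
    using fox_ZF[OF u] by blast
  have aug: "\<forall>i<n. aug (fox n u i) = 0"
    using right_ideal_gen_generator[OF foxZ] prim by (auto simp: Delta_def)
  define A where "A i k = linext (exp_sum k) (fox n u i)" for i k
  obtain E where "\<forall>j<n. \<forall>k<n. (\<Sum>i<n. E j i * A i k) = (if j = k then 1 else 0)"
    using exp_sum_matrix_left_inverse[OF foxZ aug] prim by (auto simp: A_def)
  moreover have "\<forall>i<n. \<forall>k<n. A i k + A k i = 0"
    using fox_exp_sum_skew[OF u aug] by (simp add: A_def)
  ultimately show False
    using skew_symmetric_odd_not_left_invertible[OF \<open>odd n\<close>] by blast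
qed

end
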